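(* Let $f$ be an L-additive arithmetic function with $h_f(n)\neq0$ for all $n\ge1$. Then for every positive integer $n$, $$\Lambda_f(n)=\sum_{d\mid n}\mu\!\left(\frac nd\right)\frac{f(d)}{h_f(d)}=-\sum_{d\mid n}\frac{\mu(d)f(d)}{h_f(d)},$$ i.e. $\Lambda_f=\mu\ast\frac{f}{h_f}=-\,\mathbf 1\ast\frac{\mu f}{h_f}$.
   Context: An arithmetic function $f$ is L-additive if there is a completely multiplicative arithmetic function $h_f$ such that $f(mn)=f(m)h_f(n)+f(n)h_f(m)$ for all positive integers $m,n$. The generalized von Mangoldt function of $f$ is $\Lambda_f(n)=f(p)/h_f(p)$ if $n=p^k$ for some prime $p$ and integer $k\ge1$, and $\Lambda_f(n)=0$ otherwise. $\mu$ is the Möbius function, $\mathbf 1(n)=1$, and the Dirichlet convolution is $(u\ast v)(n)=\sum_{d\mid n}u(d)v(n/d)$; quotients/products of functions are pointwise. *)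

theory Defs
  imports "HOL-Number_Theory.Number_Theory" "HOL-Computational_Algebra.Squarefree" Complex_Main
begin

(* Arithmetic functions are modelled as nat \<Rightarrow> complex; only values at n \<ge> 1 matter. *)

definition completely_multiplicative :: "(nat \<Rightarrow> complex) \<Rightarrow> bool" where
  "completely_multiplicative h \<longleftrightarrow> h 1 = 1 \<and> (\<forall>m n. m \<ge> 1 \<longrightarrow> n \<ge> 1 \<longrightarrow> h (m * n) = h m * h n)"

definition L_additive_with :: "(nat \<Rightarrow> complex) \<Rightarrow> (nat \<Rightarrow> complex) \<Rightarrow> bool" where
  "L_additive_with f h \<longleftrightarrow> completely_multiplicative h \<and>
     (\<forall>m n. m \<ge> 1 \<longrightarrow> n \<ge> 1 \<longrightarrow> f (m * n) = f m * h n + f n * h m)"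

definition gen_mangoldt :: "(nat \<Rightarrow> complex) \<Rightarrow> (nat \<Rightarrow> complex) \<Rightarrow> nat \<Rightarrow> complex" where
  "gen_mangoldt f h n =
     (if \<exists>p k. prime p \<and> k \<ge> 1 \<and> n = p ^ k
      then f (THE p. prime p \<and> (\<exists>k\<ge>1. n = p ^ k)) / h (THE p. prime p \<and> (\<exists>k\<ge>1. n = p ^ k))
      else 0)"

definition moebius :: "nat \<Rightarrow> complex" where
  "moebius n = (if n \<ge> 1 \<and> squarefree n then (-1) ^ card (prime_factors n) else 0)"

end

theory Submission
  imports Defs
begin

text \<open>
  The quotient g = f / h is completely additive, and the generalized von Mangoldt function
  takes the value g(p) at p^k. A squarefree divisor of n is the product of a set T of prime
  factors of n, so the sum of mu(d) g(d) over d | n equals the sum over T of (-1)^|T| times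
  the sum of g(p) over p in T. Exchanging the sums, the alternating sum over the supersets of
  {p} vanishes unless n is a power of p, which leaves -Lambda_f(n). The other identity follows
  from g(n/d) = g(n) - g(d), g(1) = 0 and the vanishing of the sum of mu(d) over d | n for n > 1.
\<close>

definition completely_additive :: "(nat \<Rightarrow> 'a::comm_monoid_add) \<Rightarrow> bool" where
  "completely_additive g \<longleftrightarrow> (\<forall>a b. a \<ge> 1 \<longrightarrow> b \<ge> 1 \<longrightarrow> g (a * b) = g a + g b)"

lemma completely_additiveD:
  "completely_additive g \<Longrightarrow> a \<ge> 1 \<Longrightarrow> b \<ge> 1 \<Longrightarrow> g (a * b) = g a + g b"
  by (simp add: completely_additive_def)

lemma completely_additive_one:
  fixes g :: "nat \<Rightarrow> 'a::cancel_comm_monoid_add"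
  assumes "completely_additive g"
  shows "g 1 = 0"
  using completely_additiveD[OF assms, of 1 1] by simp

lemma completely_additive_prod:
  fixes g :: "nat \<Rightarrow> 'a::cancel_comm_monoid_add"
  assumes "completely_additive g" "finite A" "\<And>x. x \<in> A \<Longrightarrow> a x \<ge> 1"
  shows "g (\<Prod>x\<in>A. a x) = (\<Sum>x\<in>A. g (a x))"
  using assms(2,3)
proof (induction A rule: finite_induct)
  case empty
  show ?case using completely_additive_one[OF assms(1)] by simp
next
  case (insert x A)
  have "(\<Prod>y\<in>A. a y) \<ge> 1"
    using insert.prems by (intro prod_ge_1) auto
  then show ?case
    using insert completely_additiveD[OF assms(1), of "a x" "\<Prod>y\<in>A. a y"] by simp
qed

lemma completely_additive_quotient:
  fixes g :: "nat \<Rightarrow> 'a::ab_group_add"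
  assumes "completely_additive g" "d dvd n" "n > 0"
  shows "g (n div d) = g n - g d"
proof -
  obtain k where n: "n = d * k" using assms(2) by blast
  then have "d \<ge> 1" "k \<ge> 1" using assms(3) by auto
  then show ?thesis using n completely_additiveD[OF assms(1), of d k] by simp
qed

lemma completely_additive_divide_L_additive:
  assumes "L_additive_with f h" "\<And>m. m \<ge> 1 \<Longrightarrow> h m \<noteq> 0"
  shows "completely_additive (\<lambda>m. f m / h m)"
  unfolding completely_additive_def
proof (intro allI impI)
  fix a b :: nat assume ab: "a \<ge> 1" "b \<ge> 1"
  then have "f (a * b) = f a * h b + f b * h a" "h (a * b) = h a * h b"
    using assms(1) by (auto simp: L_additive_with_def completely_multiplicative_def)
  then show "f (a * b) / h (a * b) = f a / h a + f b / h b"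
    using assms(2)[OF ab(1)] assms(2)[OF ab(2)] by (simp add: field_simps)
qed

lemma gen_mangoldt_altdef:
  "gen_mangoldt f h n = (if primepow n then f (aprimedivisor n) / h (aprimedivisor n) else 0)"
proof (cases "primepow n")
  case True
  then obtain p k where p: "prime p" "k > 0" "n = p ^ k" by (auto simp: primepow_def)
  have "(THE q. prime q \<and> (\<exists>j\<ge>1. n = q ^ j)) = aprimedivisor n"
  proof (rule the_equality)
    show "prime (aprimedivisor n) \<and> (\<exists>j\<ge>1. n = aprimedivisor n ^ j)"
      using p by (auto simp: aprimedivisor_prime_power intro!: exI[of _ k])
  qed (auto simp: aprimedivisor_prime_power)
  moreover have "\<exists>p k. prime p \<and> k \<ge> 1 \<and> n = p ^ k" using p by (intro exI[of _ p] exI[of _ k]) simp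
  ultimately show ?thesis using True by (simp add: gen_mangoldt_def)
next
  case False
  then have "\<not> (\<exists>p k. prime p \<and> k \<ge> 1 \<and> n = p ^ k)" by (auto simp: primepow_def Suc_le_eq)
  then have "gen_mangoldt f h n = 0" unfolding gen_mangoldt_def by (rule if_not_P)
  then show ?thesis using False by simp
qed

lemma prime_factors_primepow:
  "primepow n \<Longrightarrow> prime_factors n = {aprimedivisor (n::nat)}"
  by (auto simp: primepow_def prime_factorization_prime_power aprimedivisor_prime_power)

lemma primepow_iff_prime_factors_singleton:
  assumes "n > (0::nat)"
  shows "primepow n \<longleftrightarrow> (\<exists>p. prime_factors n = {p})"
proof
  assume "\<exists>p. prime_factors n = {p}"
  then obtain p where p: "prime_factors n = {p}" by blast
  then have "n = p ^ multiplicity p n" "prime p" "multiplicity p n > 0"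
    using prime_factorization_nat[OF assms] by (auto simp: prime_factors_multiplicity)
  then show "primepow n" by (metis primepow_prime_power)
qed (use prime_factors_primepow in blast)

lemma sum_supersets_neg_one_power_card:
  assumes "finite S" "U \<subseteq> S"
  shows "(\<Sum>T | T \<subseteq> S \<and> U \<subseteq> T. (-1::'a::ring_1) ^ card T) = (if U = S then (-1) ^ card S else 0)"
proof (cases "U = S")
  case True
  then have "{T. T \<subseteq> S \<and> U \<subseteq> T} = {S}" by auto
  then show ?thesis using True by simp
next
  case False
  then have "U \<subset> S" using assms(2) by blast
  have "finite {T. T \<subseteq> S \<and> U \<subseteq> T}" using assms(1) by simp
  then show ?thesis
    using False card_subsupersets_even_odd[OF assms(1) \<open>U \<subset> S\<close>]
    by (intro sum_alternating_cancels[THEN trans]) (auto cong: conj_cong)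
qed

lemma sum_Pow_neg_one_power_card:
  assumes "finite S"
  shows "(\<Sum>T\<in>Pow S. (-1::'a::ring_1) ^ card T) = (if S = {} then 1 else 0)"
proof -
  have "Pow S = {T. T \<subseteq> S \<and> {} \<subseteq> T}" by auto
  then show ?thesis
    using sum_supersets_neg_one_power_card[OF assms, of "{}"] by (cases "S = {}") auto
qed

lemma sum_Pow_neg_one_power_card_sum:
  fixes G :: "'b \<Rightarrow> 'a::comm_ring_1"
  assumes "finite S"
  shows "(\<Sum>T\<in>Pow S. (-1) ^ card T * sum G T) = - (\<Sum>p\<in>S. if S = {p} then G p else 0)"
proof -
  have "(\<Sum>T\<in>Pow S. (-1) ^ card T * sum G T)
      = (\<Sum>T\<in>Pow S. \<Sum>p | p \<in> S \<and> p \<in> T. (-1) ^ card T * G p)"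
    by (intro sum.cong) (auto simp: sum_distrib_left intro!: sum.cong)
  also have "\<dots> = (\<Sum>p\<in>S. \<Sum>T | T \<in> Pow S \<and> p \<in> T. (-1) ^ card T * G p)"
    using assms by (intro sum.swap_restrict) auto
  also have "\<dots> = (\<Sum>p\<in>S. G p * (\<Sum>T | T \<subseteq> S \<and> {p} \<subseteq> T. (-1) ^ card T))"
    by (intro sum.cong) (auto simp: sum_distrib_left mult.commute)
  also have "\<dots> = (\<Sum>p\<in>S. - (if S = {p} then G p else 0))"
  proof (intro sum.cong refl)
    fix p assume "p \<in> S"
    then show "G p * (\<Sum>T | T \<subseteq> S \<and> {p} \<subseteq> T. (-1) ^ card T) = - (if S = {p} then G p else 0)"
      using sum_supersets_neg_one_power_card[OF assms, of "{p}", where 'a='a] \<open>p \<in> S\<close>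
      by (cases "S = {p}") auto
  qed
  also have "\<dots> = - (\<Sum>p\<in>S. if S = {p} then G p else 0)"
    by (simp add: sum_negf)
  finally show ?thesis .
qed

lemma prime_factors_prod_primes:
  assumes "finite T" "\<And>p. p \<in> T \<Longrightarrow> prime (p::nat)"
  shows "prime_factors (\<Prod>T) = T"
proof -
  have "prime_factors (\<Prod>T) = \<Union>((prime_factors \<circ> (\<lambda>x. x)) ` T)"
    using assms by (intro prime_factors_prod) (auto dest: prime_gt_0_nat)
  also have "\<dots> = T" using assms by (auto simp: prime_prime_factors)
  finally show ?thesis .
qed

lemma squarefree_prod_primes:
  "finite T \<Longrightarrow> (\<And>p. p \<in> T \<Longrightarrow> prime (p::nat)) \<Longrightarrow> squarefree (\<Prod>T)"
  by (intro squarefree_prod_coprime) (auto simp: primes_coprime squarefree_prime)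

lemma squarefree_eq_prod_prime_factors:
  assumes "squarefree (d::nat)"
  shows "d = \<Prod>(prime_factors d)"
proof -
  have d: "d > 0" using assms by (cases d) auto
  have "d = (\<Prod>p \<in> prime_factors d. p ^ multiplicity p d)" using prime_factorization_nat[OF d] .
  also have "\<dots> = \<Prod>(prime_factors d)"
    using assms d by (intro prod.cong) (auto simp: squarefree_factorial_semiring')
  finally show ?thesis .
qed

lemma prod_dvd_if_subset_prime_factors:
  assumes "n > (0::nat)" "T \<subseteq> prime_factors n"
  shows "\<Prod>T dvd n"
proof -
  have "\<Prod>T dvd (\<Prod>p \<in> prime_factors n. p ^ multiplicity p n)"
  proof (rule prod_dvd_prod_subset2)
    fix p assume "p \<in> T"
    then have "multiplicity p n > 0" using assms by (auto simp: prime_factors_multiplicity)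
    then show "p dvd p ^ multiplicity p n" by (simp add: dvd_power)
  qed (use assms in auto)
  then show ?thesis using prime_factorization_nat[OF assms(1)] by simp
qed

lemma moebius_prod_primes:
  assumes "finite T" "\<And>p. p \<in> T \<Longrightarrow> prime p"
  shows "moebius (\<Prod>T) = (-1) ^ card T"
proof -
  have "\<Prod>T > 0" using assms(2) by (intro prod_pos) (auto intro: prime_gt_0_nat)
  then show ?thesis
    using prime_factors_prod_primes[OF assms] squarefree_prod_primes[OF assms]
    by (simp add: moebius_def)
qed

lemma sum_dvd_moebius_eq_sum_Pow:
  fixes F :: "nat \<Rightarrow> complex"
  assumes "n > 0"
  shows "(\<Sum>d | d dvd n. moebius d * F d) = (\<Sum>T \<in> Pow (prime_factors n). (-1) ^ card T * F (\<Prod>T))"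
proof -
  have "(\<Sum>d | d dvd n. moebius d * F d) = (\<Sum>d | d dvd n \<and> squarefree d. moebius d * F d)"
    using assms by (intro sum.mono_neutral_right) (auto simp: moebius_def)
  also have "\<dots> = (\<Sum>T \<in> Pow (prime_factors n). moebius (\<Prod>T) * F (\<Prod>T))"
  proof (rule sum.reindex_bij_betw[symmetric])
    show "bij_betw Prod (Pow (prime_factors n)) {d. d dvd n \<and> squarefree d}"
    proof (rule bij_betw_byWitness[where f' = prime_factors])
      show "\<forall>T\<in>Pow (prime_factors n). prime_factors (\<Prod>T) = T"
        by (auto intro!: prime_factors_prod_primes intro: finite_subset)
      show "\<forall>d\<in>{d. d dvd n \<and> squarefree d}. \<Prod>(prime_factors d) = d"
        using squarefree_eq_prod_prime_factors by auto
      show "Prod ` Pow (prime_factors n) \<subseteq> {d. d dvd n \<and> squarefree d}"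
        using assms
        by (auto intro!: squarefree_prod_primes prod_dvd_if_subset_prime_factors intro: finite_subset)
      show "prime_factors ` {d. d dvd n \<and> squarefree d} \<subseteq> Pow (prime_factors n)"
        using assms dvd_prime_factors[of n] by auto
    qed
  qed
  also have "\<dots> = (\<Sum>T \<in> Pow (prime_factors n). (-1) ^ card T * F (\<Prod>T))"
    by (intro sum.cong refl, subst moebius_prod_primes) (auto intro: finite_subset)
  finally show ?thesis .
qed

lemma sum_dvd_moebius:
  assumes "n > 0"
  shows "(\<Sum>d | d dvd n. moebius d) = (if n = 1 then 1 else 0)"
  using sum_dvd_moebius_eq_sum_Pow[OF assms, of "\<lambda>_. 1"] assms
  by (simp add: sum_Pow_neg_one_power_card prime_factorization_empty_iff)

lemma sum_dvd_moebius_mult_completely_additive: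
  assumes "completely_additive g" "n > 0"
  shows "(\<Sum>d | d dvd n. moebius d * g d) = - (if primepow n then g (aprimedivisor n) else 0)"
proof -
  let ?P = "prime_factors n"
  have "(\<Sum>d | d dvd n. moebius d * g d) = (\<Sum>T \<in> Pow ?P. (-1) ^ card T * g (\<Prod>T))"
    using sum_dvd_moebius_eq_sum_Pow[OF assms(2)] .
  also have "\<dots> = (\<Sum>T \<in> Pow ?P. (-1) ^ card T * sum g T)"
    by (intro sum.cong refl, subst completely_additive_prod[OF assms(1)])
       (auto simp: Suc_le_eq intro: finite_subset prime_gt_0_nat dest: in_prime_factors_imp_prime)
  also have "\<dots> = - (\<Sum>p \<in> ?P. if ?P = {p} then g p else 0)"
    by (simp add: sum_Pow_neg_one_power_card_sum)
  also have "(\<Sum>p \<in> ?P. if ?P = {p} then g p else 0) = (if primepow n then g (aprimedivisor n) else 0)"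
    using prime_factors_primepow[of n] primepow_iff_prime_factors_singleton[OF assms(2)]
    by (cases "primepow n") auto
  finally show ?thesis .
qed

lemma sum_dvd_moebius_quotient_mult_completely_additive:
  assumes "completely_additive g" "n > 0"
  shows "(\<Sum>d | d dvd n. moebius (n div d) * g d) = (if primepow n then g (aprimedivisor n) else 0)"
proof -
  have "(\<Sum>d | d dvd n. moebius (n div d) * g d) = (\<Sum>d | d dvd n. moebius d * g (n div d))"
    using assms(2)
    by (intro sum.reindex_bij_witness[where i = "\<lambda>d. n div d" and j = "\<lambda>d. n div d"])
       (auto simp: div_div_eq_right)
  also have "\<dots> = (\<Sum>d | d dvd n. moebius d * (g n - g d))"
    using completely_additive_quotient[OF assms(1) _ assms(2)] by (intro sum.cong) auto
  also have "\<dots> = g n * (\<Sum>d | d dvd n. moebius d) - (\<Sum>d | d dvd n. moebius d * g d)"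
    by (simp add: algebra_simps sum_subtractf sum_distrib_left)
  also have "\<dots> = (if primepow n then g (aprimedivisor n) else 0)"
    using assms completely_additive_one[OF assms(1)]
    by (simp add: sum_dvd_moebius sum_dvd_moebius_mult_completely_additive)
  finally show ?thesis .
qed

theorem theorem3p2:
  fixes f h :: "nat \<Rightarrow> complex" and n :: nat
  assumes "L_additive_with f h"
    and "\<And>m. m \<ge> 1 \<Longrightarrow> h m \<noteq> 0"
    and "n \<ge> 1"
  shows "gen_mangoldt f h n = (\<Sum>d | d dvd n. moebius (n div d) * (f d / h d)) \<and>
         gen_mangoldt f h n = - (\<Sum>d | d dvd n. moebius d * f d / h d)"
proof -
  have additive: "completely_additive (\<lambda>m. f m / h m)"
    using assms(1,2) by (rule completely_additive_divide_L_additive)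
  have "n > 0" using assms(3) by simp
  show ?thesis
    using sum_dvd_moebius_quotient_mult_completely_additive[OF additive \<open>n > 0\<close>]
          sum_dvd_moebius_mult_completely_additive[OF additive \<open>n > 0\<close>]
    by (simp add: gen_mangoldt_altdef)
qed

end
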